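(* Let $G_1$ and $G_2$ be two vertex-disjoint finite connected simple graphs, each having at least one edge. Then $\mathcal{NC}(G_1\sqcup G_2)\simeq\Sigma\big(\mathcal{NC}(G_1)\ast\mathcal{NC}(G_2)\big)$ (homotopy equivalence of geometric realizations), where $\Sigma$ denotes suspension.
   Context: For a finite simple graph $G$, a set $S\subseteq V(G)$ is a cover of $G$ if $V(G)\setminus S$ is an independent set (contains no edge of $G$). The non-cover complex $\mathcal{NC}(G)$ is the simplicial complex whose simplices are the subsets $S\subseteq V(G)$ that are not covers, i.e. such that $V(G)\setminus S$ contains both endpoints of some edge of $G$. The join $K_1\ast K_2$ of complexes on disjoint vertex sets has simplices $\sigma\sqcup\tau$, $\sigma\in K_1,\tau\in K_2$. $G_1\sqcup G_2$ is the disjoint union of graphs. *)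

theory Defs
  imports "HOL-Analysis.Analysis"
begin

definition simple_graph :: "'a set \<Rightarrow> 'a set set \<Rightarrow> bool" where
  "simple_graph V E \<longleftrightarrow> finite V \<and> (\<forall>e\<in>E. e \<subseteq> V \<and> card e = 2)"

definition adj :: "'a set set \<Rightarrow> 'a \<Rightarrow> 'a \<Rightarrow> bool" where
  "adj E u v \<longleftrightarrow> {u, v} \<in> E"

definition connected_graph :: "'a set \<Rightarrow> 'a set set \<Rightarrow> bool" where
  "connected_graph V E \<longleftrightarrow> V \<noteq> {} \<and> (\<forall>u\<in>V. \<forall>v\<in>V. (adj E)\<^sup>*\<^sup>* u v)"

definition dunion_V :: "'a set \<Rightarrow> 'b set \<Rightarrow> ('a + 'b) set" where
  "dunion_V V1 V2 = Inl ` V1 \<union> Inr ` V2"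

definition dunion_E :: "'a set set \<Rightarrow> 'b set set \<Rightarrow> ('a + 'b) set set" where
  "dunion_E E1 E2 = (image Inl) ` E1 \<union> (image Inr) ` E2"

definition non_cover_complex :: "'a set \<Rightarrow> 'a set set \<Rightarrow> 'a set set" where
  "non_cover_complex V E = {S. S \<subseteq> V \<and> (\<exists>e\<in>E. e \<subseteq> V - S)}"

definition cjoin :: "'a set set \<Rightarrow> 'b set set \<Rightarrow> ('a + 'b) set set" where
  "cjoin K1 K2 = {Inl ` \<sigma> \<union> Inr ` \<tau> | \<sigma> \<tau>. \<sigma> \<in> K1 \<and> \<tau> \<in> K2}"

definition sphere0 :: "bool set set" where
  "sphere0 = {{}, {True}, {False}}"

definition csusp :: "'a set set \<Rightarrow> ('a + bool) set set" where
  "csusp K = cjoin K sphere0"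

text \<open>Geometric realization of a (finite-simplex) simplicial complex K, as the set of
  barycentric-coordinate functions supported on a simplex of K, with the subspace
  topology of the product topology on 'v \<Rightarrow> real.\<close>
definition geom_real_set :: "'v set set \<Rightarrow> ('v \<Rightarrow> real) set" where
  "geom_real_set K = {f. (\<forall>v. 0 \<le> f v) \<and> {v. f v \<noteq> 0} \<in> K \<and> finite {v. f v \<noteq> 0}
                        \<and> sum f {v. f v \<noteq> 0} = 1}"

definition geom_real :: "'v set set \<Rightarrow> ('v \<Rightarrow> real) topology" where
  "geom_real K = top_of_set (geom_real_set K)"

end

theory Submission
  imports Defs
begin

(*
  Points of the realization of NC(G1 + G2) are probability vectors x on V1 + V2 that vanish
  on some edge of G1 or of G2.  For a graph G put l_G(x) = min over edges e of max of x on e,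
  a continuous function of x.  Lowering the G_i-coordinates of x by l_{G_i}(x) (and clamping
  at 0) makes them vanish on an edge of G_i; the mass removed on G1 is moved to one
  suspension vertex and the mass removed on G2 to the other.  As x already vanishes on an
  edge of G1 or of G2, one of the two levels is 0, so the image lies in the realization of
  the suspension of NC(G1) * NC(G2).  Spreading the mass of a suspension vertex uniformly
  over the vertices of the corresponding graph is a continuous section of this map, and the
  composite in the other order leaves x unchanged on the side where x vanishes on an edge,
  so the straight-line homotopy from it to the identity stays in the realization.
*)

abbreviation supp :: "('v \<Rightarrow> real) \<Rightarrow> 'v set" where
  "supp x \<equiv> {v. x v \<noteq> 0}"

definition zero_on_edge :: "'c set set \<Rightarrow> ('c \<Rightarrow> real) \<Rightarrow> bool" where
  "zero_on_edge E x \<longleftrightarrow> (\<exists>e\<in>E. \<forall>u\<in>e. x u = 0)"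

lemma geom_real_set_iff:
  assumes "finite W" and "\<And>\<sigma>. \<sigma> \<in> K \<Longrightarrow> \<sigma> \<subseteq> W"
  shows "x \<in> geom_real_set K \<longleftrightarrow> (\<forall>v. 0 \<le> x v) \<and> supp x \<in> K \<and> sum x W = 1"
proof -
  have "finite (supp x) \<and> sum x (supp x) = sum x W" if "supp x \<in> K"
    using assms that by (auto intro: finite_subset sum.mono_neutral_left)
  then show ?thesis
    unfolding geom_real_set_def by auto
qed

lemma supp_comp: "supp (x \<circ> f) = f -` supp x"
  by auto

lemma non_cover_complex_subset: "\<sigma> \<in> non_cover_complex V E \<Longrightarrow> \<sigma> \<subseteq> V"
  by (simp add: non_cover_complex_def)

lemma supp_in_non_cover_complex_iff:
  assumes "\<forall>e\<in>E. e \<subseteq> V"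
  shows "supp x \<in> non_cover_complex V E \<longleftrightarrow> supp x \<subseteq> V \<and> zero_on_edge E x"
  using assms unfolding non_cover_complex_def zero_on_edge_def by blast

lemma dunion_V_eq_Plus: "dunion_V V1 V2 = V1 <+> V2"
  by (simp add: dunion_V_def Plus_def)

lemma Plus_vimage_Inl_Inr: "Inl -` A <+> Inr -` A = A"
proof (rule set_eqI)
  show "x \<in> Inl -` A <+> Inr -` A \<longleftrightarrow> x \<in> A" for x
    by (cases x) auto
qed

lemma subset_Plus_iff: "A \<subseteq> B1 <+> B2 \<longleftrightarrow> Inl -` A \<subseteq> B1 \<and> Inr -` A \<subseteq> B2"
  by (subst (1) Plus_vimage_Inl_Inr[of A, symmetric]) (auto simp: Plus_def)

lemma cjoin_iff: "A \<in> cjoin K1 K2 \<longleftrightarrow> Inl -` A \<in> K1 \<and> Inr -` A \<in> K2"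
proof
  show "A \<in> cjoin K1 K2" if "Inl -` A \<in> K1 \<and> Inr -` A \<in> K2"
    using that Plus_vimage_Inl_Inr[of A] unfolding cjoin_def Plus_def by blast
next
  show "Inl -` A \<in> K1 \<and> Inr -` A \<in> K2" if "A \<in> cjoin K1 K2"
  proof -
    from that obtain \<sigma> \<tau> where "A = Inl ` \<sigma> \<union> Inr ` \<tau>" "\<sigma> \<in> K1" "\<tau> \<in> K2"
      unfolding cjoin_def by blast
    moreover have "Inl -` (Inl ` \<sigma> \<union> Inr ` \<tau>) = \<sigma>" "Inr -` (Inl ` \<sigma> \<union> Inr ` \<tau>) = \<tau>"
      by auto
    ultimately show ?thesis by simp
  qed
qed

lemma cjoin_subset_Plus:
  assumes "\<And>\<sigma>. \<sigma> \<in> K1 \<Longrightarrow> \<sigma> \<subseteq> W1" and "\<And>\<tau>. \<tau> \<in> K2 \<Longrightarrow> \<tau> \<subseteq> W2"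
    and "A \<in> cjoin K1 K2"
  shows "A \<subseteq> W1 <+> W2"
  using assms by (auto simp: cjoin_iff subset_Plus_iff)

lemma sphere0_iff: "B \<in> sphere0 \<longleftrightarrow> B \<noteq> UNIV"
proof -
  have "B \<in> Pow {False, True}"
    by (simp add: UNIV_bool[symmetric])
  then show ?thesis
    unfolding sphere0_def by (auto simp: Pow_insert UNIV_bool insert_commute)
qed

lemma zero_on_edge_dunion_E_iff:
  "zero_on_edge (dunion_E E1 E2) x \<longleftrightarrow> zero_on_edge E1 (x \<circ> Inl) \<or> zero_on_edge E2 (x \<circ> Inr)"
  unfolding zero_on_edge_def dunion_E_def by (simp add: bex_Un)

lemma dunion_E_subset:
  assumes "\<forall>e\<in>E1. e \<subseteq> V1" and "\<forall>e\<in>E2. e \<subseteq> V2"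
  shows "\<forall>e\<in>dunion_E E1 E2. e \<subseteq> V1 <+> V2"
  using assms unfolding dunion_E_def by auto

lemma continuous_on_Min_image:
  fixes f :: "'i \<Rightarrow> 'a::topological_space \<Rightarrow> real"
  assumes "finite I" and "I \<noteq> {}" and "\<And>i. i \<in> I \<Longrightarrow> continuous_on S (f i)"
  shows "continuous_on S (\<lambda>x. Min ((\<lambda>i. f i x) ` I))"
  using assms
proof (induction I rule: finite_ne_induct)
  case (insert i I)
  then have "continuous_on S (\<lambda>x. min (f i x) (Min ((\<lambda>i. f i x) ` I)))"
    by (intro continuous_intros) auto
  with insert show ?case
    by (simp add: Min_insert)
qed simp

lemma continuous_on_Max_image:
  fixes f :: "'i \<Rightarrow> 'a::topological_space \<Rightarrow> real"
  assumes "finite I" and "I \<noteq> {}" and "\<And>i. i \<in> I \<Longrightarrow> continuous_on S (f i)"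
  shows "continuous_on S (\<lambda>x. Max ((\<lambda>i. f i x) ` I))"
proof -
  have "continuous_on S (\<lambda>x. - Min ((\<lambda>i. - f i x) ` I))"
    using assms by (intro continuous_intros continuous_on_Min_image) auto
  moreover have "- Min ((\<lambda>i. - f i x) ` I) = Max ((\<lambda>i. f i x) ` I)" for x
    using assms by (simp add: image_image)
  ultimately show ?thesis
    by simp
qed

lemma continuous_on_coordinate: "continuous_on S (\<lambda>x. x i :: real)"
  by (rule continuous_on_subset[OF continuous_on_product_coordinates]) simp

lemma homotopic_with_linear_fun:
  fixes f g :: "'a::topological_space \<Rightarrow> 'b \<Rightarrow> real"
  assumes contf: "continuous_on S f" and contg: "continuous_on S g"
    and segment: "\<And>x t. x \<in> S \<Longrightarrow> 0 \<le> t \<Longrightarrow> t \<le> 1 \<Longrightarrow> (\<lambda>v. (1 - t) * f x v + t * g x v) \<in> T"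
  shows "homotopic_with_canon (\<lambda>h. True) S T f g"
proof -
  let ?h = "\<lambda>y v. (1 - fst y) * f (snd y) v + fst y * g (snd y) v"
  have "continuous_on ({0..1} \<times> S) ?h"
  proof (rule continuous_on_coordinatewise_then_product)
    fix v
    have "continuous_on ({0..1::real} \<times> S) (\<lambda>y. f (snd y) v)"
      by (rule continuous_on_compose2[OF continuous_on_product_then_coordinatewise[OF contf]
            continuous_on_snd]) auto
    moreover have "continuous_on ({0..1::real} \<times> S) (\<lambda>y. g (snd y) v)"
      by (rule continuous_on_compose2[OF continuous_on_product_then_coordinatewise[OF contg]
            continuous_on_snd]) auto
    ultimately show "continuous_on ({0..1} \<times> S) (\<lambda>y. ?h y v)"
      by (intro continuous_intros)
  qed
  moreover have "?h ` ({0..1} \<times> S) \<subseteq> T"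
    using segment by auto
  ultimately show ?thesis
    unfolding homotopic_with_def
    by (intro exI[of _ ?h]) (auto simp: image_subset_iff Pi_iff)
qed

definition edge_level :: "'c set set \<Rightarrow> ('c \<Rightarrow> real) \<Rightarrow> real" where
  "edge_level E x = Min ((\<lambda>e. Max (x ` e)) ` E)"

locale finite_edge_family =
  fixes E :: "'c set set"
  assumes finite_family: "finite E" and family_nonempty: "E \<noteq> {}"
    and finite_edge: "e \<in> E \<Longrightarrow> finite e" and edge_nonempty: "e \<in> E \<Longrightarrow> e \<noteq> {}"
begin

lemma edge_level_le_iff: "edge_level E x \<le> c \<longleftrightarrow> (\<exists>e\<in>E. \<forall>u\<in>e. x u \<le> c)"
  unfolding edge_level_def
  using finite_family family_nonempty finite_edge edge_nonempty by (simp add: Min_le_iff Max_le_iff)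

lemma le_edge_level_iff: "c \<le> edge_level E x \<longleftrightarrow> (\<forall>e\<in>E. \<exists>u\<in>e. c \<le> x u)"
  unfolding edge_level_def
  using finite_family family_nonempty finite_edge edge_nonempty by (simp add: Min_ge_iff Max_ge_iff)

lemma edge_level_nonneg: "(\<And>u. 0 \<le> x u) \<Longrightarrow> 0 \<le> edge_level E x"
  using edge_nonempty by (auto simp: le_edge_level_iff)

lemma edge_level_eq_0:
  assumes "\<And>u. 0 \<le> x u" and "zero_on_edge E x"
  shows "edge_level E x = 0"
  using assms edge_level_nonneg[of x] unfolding zero_on_edge_def
  by (metis antisym edge_level_le_iff order_refl)

lemma continuous_on_edge_level:
  assumes "\<And>u. continuous_on S (\<lambda>s. f s u)"
  shows "continuous_on S (\<lambda>s. edge_level E (f s))"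
  unfolding edge_level_def
  using finite_family family_nonempty finite_edge edge_nonempty assms
  by (intro continuous_on_Min_image continuous_on_Max_image) auto

end

locale nonempty_graph =
  fixes V :: "'a set" and E :: "'a set set"
  assumes simple: "simple_graph V E" and has_edge: "E \<noteq> {}"
begin

lemma finite_vertices: "finite V"
  using simple by (simp add: simple_graph_def)

lemma edges_subset: "\<forall>e\<in>E. e \<subseteq> V"
  using simple by (simp add: simple_graph_def)

sublocale finite_edge_family E
proof
  show "finite E"
    using finite_vertices edges_subset by (meson PowI finite_Pow_iff finite_subset subsetI)
  show "finite e" and "e \<noteq> {}" if "e \<in> E" for e
    using simple that by (auto simp: simple_graph_def intro: card_ge_0_finite)
qed (fact has_edge)

lemma card_vertices_pos: "0 < card V"
  using finite_vertices edges_subset family_nonempty edge_nonempty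
  by (metis card_gt_0_iff ex_in_conv subset_empty)

definition lower :: "('a \<Rightarrow> real) \<Rightarrow> 'a \<Rightarrow> real" where
  "lower x u = max 0 (x u - edge_level E x)"

definition removed :: "('a \<Rightarrow> real) \<Rightarrow> real" where
  "removed x = (\<Sum>u\<in>V. min (x u) (edge_level E x))"

definition raise :: "('a \<Rightarrow> real) \<Rightarrow> real \<Rightarrow> 'a \<Rightarrow> real" where
  "raise x c u = x u + (if u \<in> V then c / card V else 0)"

lemma lower_nonneg: "0 \<le> lower x u"
  by (simp add: lower_def)

lemma sum_lower_add_removed: "sum (lower x) V + removed x = sum x V"
proof -
  have "lower x u + min (x u) (edge_level E x) = x u" for u
    by (simp add: lower_def max_def min_def)
  then show ?thesis
    by (simp add: removed_def flip: sum.distrib)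
qed

lemma zero_on_edge_lower: "zero_on_edge E (lower x)"
  using edge_level_le_iff[of x "edge_level E x"]
  by (fastforce simp: zero_on_edge_def lower_def max_def)

lemma supp_lower:
  assumes "\<And>u. 0 \<le> x u"
  shows "supp (lower x) \<subseteq> supp x"
  using assms edge_level_nonneg[of x] by (auto simp: lower_def)

lemma removed_nonneg: "(\<And>u. 0 \<le> x u) \<Longrightarrow> 0 \<le> removed x"
  using edge_level_nonneg[of x] by (auto simp: removed_def intro: sum_nonneg)

lemma lower_eq_self:
  assumes "\<And>u. 0 \<le> x u" and "zero_on_edge E x"
  shows "lower x = x"
  using assms edge_level_eq_0 by (auto simp: lower_def)

lemma removed_eq_0:
  assumes "\<And>u. 0 \<le> x u" and "zero_on_edge E x"
  shows "removed x = 0"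
  using assms edge_level_eq_0 by (simp add: removed_def min_absorb2)

lemma raise_0: "raise x 0 = x"
  by (simp add: raise_def fun_eq_iff)

lemma raise_nonneg: "0 \<le> x u \<Longrightarrow> 0 \<le> c \<Longrightarrow> 0 \<le> raise x c u"
  by (simp add: raise_def)

lemma supp_raise: "supp (raise x c) \<subseteq> supp x \<union> V"
  by (auto simp: raise_def split: if_splits)

lemma sum_raise: "sum (raise x c) V = sum x V + c"
  using card_vertices_pos by (simp add: raise_def sum.distrib)

context
  fixes x :: "'a \<Rightarrow> real" and c :: real
  assumes nonneg: "\<And>u. 0 \<le> x u" and supp_sub: "supp x \<subseteq> V"
    and zero_edge: "zero_on_edge E x" and c_nonneg: "0 \<le> c"
begin

lemma edge_level_raise: "edge_level E (raise x c) = c / card V"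
proof (rule antisym)
  obtain e where "e \<in> E" and "\<forall>u\<in>e. x u = 0"
    using zero_edge by (auto simp: zero_on_edge_def)
  then show "edge_level E (raise x c) \<le> c / card V"
    using edges_subset by (force simp: edge_level_le_iff raise_def)
  show "c / card V \<le> edge_level E (raise x c)"
    using nonneg edges_subset edge_nonempty by (fastforce simp: le_edge_level_iff raise_def)
qed

lemma lower_raise: "lower (raise x c) = x"
proof
  fix u
  have "x u = 0" if "u \<notin> V"
    using supp_sub that by blast
  then show "lower (raise x c) u = x u"
    using nonneg[of u] c_nonneg by (auto simp: lower_def edge_level_raise raise_def)
qed

lemma removed_raise: "removed (raise x c) = c"
proof -
  have "removed (raise x c) = (\<Sum>u\<in>V. c / card V)"
    unfolding removed_def edge_level_raise
    using nonneg by (intro sum.cong) (auto simp: raise_def)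
  also have "\<dots> = c"
    using card_vertices_pos by simp
  finally show ?thesis .
qed

end

lemma raise_lower_removed:
  assumes "\<And>u. 0 \<le> x u" and "zero_on_edge E x"
  shows "raise (lower x) (removed x) = x"
  using assms by (simp add: lower_eq_self removed_eq_0 raise_0)

lemma continuous_on_lower:
  assumes "\<And>u. continuous_on S (\<lambda>s. f s u)"
  shows "continuous_on S (\<lambda>s. lower (f s) u)"
  unfolding lower_def using assms by (intro continuous_intros continuous_on_edge_level)

lemma continuous_on_raise:
  assumes "\<And>u. continuous_on S (\<lambda>s. f s u)" and "continuous_on S g"
  shows "continuous_on S (\<lambda>s. raise (f s) (g s) u)"
  using assms card_vertices_pos by (cases "u \<in> V") (auto simp: raise_def intro!: continuous_intros)

lemma continuous_on_removed:
  assumes "\<And>u. continuous_on S (\<lambda>s. f s u)"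
  shows "continuous_on S (\<lambda>s. removed (f s))"
  unfolding removed_def using assms by (intro continuous_intros continuous_on_edge_level)

end

locale two_graphs = G1: nonempty_graph V1 E1 + G2: nonempty_graph V2 E2
  for V1 :: "'a set" and E1 and V2 :: "'b set" and E2
begin

abbreviation union_realization :: "('a + 'b \<Rightarrow> real) set" where
  "union_realization \<equiv> geom_real_set (non_cover_complex (dunion_V V1 V2) (dunion_E E1 E2))"

abbreviation susp_realization :: "(('a + 'b) + bool \<Rightarrow> real) set" where
  "susp_realization \<equiv>
     geom_real_set (csusp (cjoin (non_cover_complex V1 E1) (non_cover_complex V2 E2)))"

lemma mem_union_realization_iff:
  "x \<in> union_realization \<longleftrightarrow>
     (\<forall>v. 0 \<le> x v) \<and> supp (x \<circ> Inl) \<subseteq> V1 \<and> supp (x \<circ> Inr) \<subseteq> V2 \<and>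
     (zero_on_edge E1 (x \<circ> Inl) \<or> zero_on_edge E2 (x \<circ> Inr)) \<and>
     sum (x \<circ> Inl) V1 + sum (x \<circ> Inr) V2 = 1"
proof -
  have finite: "finite (V1 <+> V2)"
    using G1.finite_vertices G2.finite_vertices by simp
  have "x \<in> union_realization \<longleftrightarrow> (\<forall>v. 0 \<le> x v) \<and>
      supp x \<in> non_cover_complex (V1 <+> V2) (dunion_E E1 E2) \<and> sum x (V1 <+> V2) = 1"
    unfolding dunion_V_eq_Plus by (rule geom_real_set_iff[OF finite non_cover_complex_subset])
  then show ?thesis
    unfolding supp_in_non_cover_complex_iff[OF dunion_E_subset[OF G1.edges_subset G2.edges_subset]]
      subset_Plus_iff zero_on_edge_dunion_E_iff
      sum.Plus[OF G1.finite_vertices G2.finite_vertices]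
    by (auto simp: supp_comp)
qed

lemma mem_susp_realization_iff:
  "y \<in> susp_realization \<longleftrightarrow>
     (\<forall>w. 0 \<le> y w) \<and> supp (y \<circ> Inl \<circ> Inl) \<subseteq> V1 \<and> supp (y \<circ> Inl \<circ> Inr) \<subseteq> V2 \<and>
     zero_on_edge E1 (y \<circ> Inl \<circ> Inl) \<and> zero_on_edge E2 (y \<circ> Inl \<circ> Inr) \<and>
     (y (Inr True) = 0 \<or> y (Inr False) = 0) \<and>
     sum (y \<circ> Inl \<circ> Inl) V1 + sum (y \<circ> Inl \<circ> Inr) V2 + y (Inr True) + y (Inr False) = 1"
proof -
  have finite: "finite ((V1 <+> V2) <+> (UNIV :: bool set))"
    using G1.finite_vertices G2.finite_vertices by simp
  have join_simplices: "\<tau> \<subseteq> V1 <+> V2"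
    if "\<tau> \<in> cjoin (non_cover_complex V1 E1) (non_cover_complex V2 E2)" for \<tau>
    using that by (meson cjoin_subset_Plus non_cover_complex_subset)
  have simplices: "\<sigma> \<subseteq> (V1 <+> V2) <+> UNIV"
    if "\<sigma> \<in> csusp (cjoin (non_cover_complex V1 E1) (non_cover_complex V2 E2))" for \<sigma>
    using that unfolding csusp_def by (meson cjoin_subset_Plus join_simplices subset_UNIV)
  have sphere: "supp (y \<circ> Inr) \<in> sphere0 \<longleftrightarrow> y (Inr True) = 0 \<or> y (Inr False) = 0"
    by (simp add: sphere0_iff set_eq_iff ex_bool_eq)
  have sum: "sum y ((V1 <+> V2) <+> UNIV) =
      sum (y \<circ> Inl \<circ> Inl) V1 + sum (y \<circ> Inl \<circ> Inr) V2 + y (Inr True) + y (Inr False)"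
    using G1.finite_vertices G2.finite_vertices by (simp add: sum.Plus UNIV_bool)
  have "y \<in> susp_realization \<longleftrightarrow> (\<forall>w. 0 \<le> y w) \<and>
      supp y \<in> csusp (cjoin (non_cover_complex V1 E1) (non_cover_complex V2 E2)) \<and>
      sum y ((V1 <+> V2) <+> UNIV) = 1"
    by (rule geom_real_set_iff[OF finite simplices])
  moreover have "supp y \<in> csusp (cjoin (non_cover_complex V1 E1) (non_cover_complex V2 E2)) \<longleftrightarrow>
      supp (y \<circ> Inl \<circ> Inl) \<in> non_cover_complex V1 E1 \<and>
      supp (y \<circ> Inl \<circ> Inr) \<in> non_cover_complex V2 E2 \<and> supp (y \<circ> Inr) \<in> sphere0"
    by (simp add: csusp_def cjoin_iff supp_comp)
  ultimately show ?thesis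
    using supp_in_non_cover_complex_iff[OF G1.edges_subset]
      supp_in_non_cover_complex_iff[OF G2.edges_subset]
    unfolding sphere sum by blast
qed

definition to_susp :: "('a + 'b \<Rightarrow> real) \<Rightarrow> ('a + 'b) + bool \<Rightarrow> real" where
  "to_susp x = case_sum (case_sum (G1.lower (x \<circ> Inl)) (G2.lower (x \<circ> Inr)))
     (\<lambda>b. if b then G2.removed (x \<circ> Inr) else G1.removed (x \<circ> Inl))"

definition from_susp :: "(('a + 'b) + bool \<Rightarrow> real) \<Rightarrow> 'a + 'b \<Rightarrow> real" where
  "from_susp y = case_sum (G1.raise (y \<circ> Inl \<circ> Inl) (y (Inr False)))
     (G2.raise (y \<circ> Inl \<circ> Inr) (y (Inr True)))"

lemma to_susp_simps:
  "to_susp x \<circ> Inl \<circ> Inl = G1.lower (x \<circ> Inl)" "to_susp x \<circ> Inl \<circ> Inr = G2.lower (x \<circ> Inr)"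
  "to_susp x (Inr True) = G2.removed (x \<circ> Inr)" "to_susp x (Inr False) = G1.removed (x \<circ> Inl)"
  by (simp_all add: to_susp_def fun_eq_iff)

lemma from_susp_simps:
  "from_susp y \<circ> Inl = G1.raise (y \<circ> Inl \<circ> Inl) (y (Inr False))"
  "from_susp y \<circ> Inr = G2.raise (y \<circ> Inl \<circ> Inr) (y (Inr True))"
  by (simp_all add: from_susp_def fun_eq_iff)

lemma to_susp_in_susp_realization:
  assumes "x \<in> union_realization"
  shows "to_susp x \<in> susp_realization"
proof -
  have nonneg: "\<forall>v. 0 \<le> x v" and supp1: "supp (x \<circ> Inl) \<subseteq> V1" and supp2: "supp (x \<circ> Inr) \<subseteq> V2"
    and edge: "zero_on_edge E1 (x \<circ> Inl) \<or> zero_on_edge E2 (x \<circ> Inr)"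
    and sum: "sum (x \<circ> Inl) V1 + sum (x \<circ> Inr) V2 = 1"
    using assms unfolding mem_union_realization_iff by blast+
  have "\<forall>w. 0 \<le> to_susp x w"
    using nonneg G1.removed_nonneg G2.removed_nonneg
    by (auto simp: to_susp_def G1.lower_nonneg G2.lower_nonneg split: sum.split)
  moreover have "supp (to_susp x \<circ> Inl \<circ> Inl) \<subseteq> V1" "supp (to_susp x \<circ> Inl \<circ> Inr) \<subseteq> V2"
    using G1.supp_lower[of "x \<circ> Inl"] G2.supp_lower[of "x \<circ> Inr"] nonneg supp1 supp2
    by (auto simp: to_susp_simps)
  moreover have "zero_on_edge E1 (to_susp x \<circ> Inl \<circ> Inl)" "zero_on_edge E2 (to_susp x \<circ> Inl \<circ> Inr)"
    by (simp_all add: to_susp_simps G1.zero_on_edge_lower G2.zero_on_edge_lower)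
  moreover have "to_susp x (Inr True) = 0 \<or> to_susp x (Inr False) = 0"
    using edge nonneg G1.removed_eq_0[of "x \<circ> Inl"] G2.removed_eq_0[of "x \<circ> Inr"]
    by (auto simp: to_susp_simps)
  moreover have "sum (to_susp x \<circ> Inl \<circ> Inl) V1 + sum (to_susp x \<circ> Inl \<circ> Inr) V2
      + to_susp x (Inr True) + to_susp x (Inr False) = 1"
    using sum G1.sum_lower_add_removed[of "x \<circ> Inl"] G2.sum_lower_add_removed[of "x \<circ> Inr"]
    by (simp add: to_susp_simps)
  ultimately show ?thesis
    unfolding mem_susp_realization_iff by blast
qed

lemma from_susp_in_union_realization:
  assumes "y \<in> susp_realization"
  shows "from_susp y \<in> union_realization"
proof -
  have nonneg: "\<forall>w. 0 \<le> y w"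
    and supp1: "supp (y \<circ> Inl \<circ> Inl) \<subseteq> V1" and supp2: "supp (y \<circ> Inl \<circ> Inr) \<subseteq> V2"
    and edge1: "zero_on_edge E1 (y \<circ> Inl \<circ> Inl)" and edge2: "zero_on_edge E2 (y \<circ> Inl \<circ> Inr)"
    and pole: "y (Inr True) = 0 \<or> y (Inr False) = 0"
    and sum: "sum (y \<circ> Inl \<circ> Inl) V1 + sum (y \<circ> Inl \<circ> Inr) V2 + y (Inr True) + y (Inr False) = 1"
    using assms unfolding mem_susp_realization_iff by blast+
  have "\<forall>v. 0 \<le> from_susp y v"
  proof
    show "0 \<le> from_susp y v" for v
      using nonneg by (cases v) (simp_all add: from_susp_def G1.raise_nonneg G2.raise_nonneg)
  qed
  moreover have "supp (from_susp y \<circ> Inl) \<subseteq> V1" "supp (from_susp y \<circ> Inr) \<subseteq> V2"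
    using G1.supp_raise[of "y \<circ> Inl \<circ> Inl" "y (Inr False)"]
      G2.supp_raise[of "y \<circ> Inl \<circ> Inr" "y (Inr True)"] supp1 supp2
    unfolding from_susp_simps by blast+
  moreover have "zero_on_edge E1 (from_susp y \<circ> Inl) \<or> zero_on_edge E2 (from_susp y \<circ> Inr)"
    using pole edge1 edge2 unfolding from_susp_simps by (auto simp only: G1.raise_0 G2.raise_0)
  moreover have "sum (from_susp y \<circ> Inl) V1 + sum (from_susp y \<circ> Inr) V2 = 1"
    using sum by (simp add: from_susp_simps G1.sum_raise G2.sum_raise)
  ultimately show ?thesis
    unfolding mem_union_realization_iff by blast
qed

lemma to_susp_from_susp:
  assumes "y \<in> susp_realization"
  shows "to_susp (from_susp y) = y"
proof -
  have nonneg: "\<forall>w. 0 \<le> y w"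
    and supp1: "supp (y \<circ> Inl \<circ> Inl) \<subseteq> V1" and supp2: "supp (y \<circ> Inl \<circ> Inr) \<subseteq> V2"
    and edge1: "zero_on_edge E1 (y \<circ> Inl \<circ> Inl)" and edge2: "zero_on_edge E2 (y \<circ> Inl \<circ> Inr)"
    using assms unfolding mem_susp_realization_iff by blast+
  have "G1.lower (G1.raise (y \<circ> Inl \<circ> Inl) (y (Inr False))) = y \<circ> Inl \<circ> Inl"
    and "G1.removed (G1.raise (y \<circ> Inl \<circ> Inl) (y (Inr False))) = y (Inr False)"
    using nonneg supp1 edge1 by (simp_all add: G1.lower_raise G1.removed_raise)
  moreover have "G2.lower (G2.raise (y \<circ> Inl \<circ> Inr) (y (Inr True))) = y \<circ> Inl \<circ> Inr"
    and "G2.removed (G2.raise (y \<circ> Inl \<circ> Inr) (y (Inr True))) = y (Inr True)"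
    using nonneg supp2 edge2 by (simp_all add: G2.lower_raise G2.removed_raise)
  ultimately have "to_susp (from_susp y) w = y w" for w
    by (auto simp: to_susp_def from_susp_simps split: sum.split)
  then show ?thesis ..
qed

lemma from_susp_to_susp_Inl:
  assumes "\<forall>v. 0 \<le> x v" and "zero_on_edge E1 (x \<circ> Inl)"
  shows "from_susp (to_susp x) \<circ> Inl = x \<circ> Inl"
  using assms by (simp add: from_susp_simps to_susp_simps G1.raise_lower_removed)

lemma from_susp_to_susp_Inr:
  assumes "\<forall>v. 0 \<le> x v" and "zero_on_edge E2 (x \<circ> Inr)"
  shows "from_susp (to_susp x) \<circ> Inr = x \<circ> Inr"
  using assms by (simp add: from_susp_simps to_susp_simps G2.raise_lower_removed)

lemma convex_comb_in_union_realization: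
  assumes x: "x \<in> union_realization" and z: "z \<in> union_realization" and t: "0 \<le> t" "t \<le> 1"
    and agree1: "zero_on_edge E1 (x \<circ> Inl) \<Longrightarrow> z \<circ> Inl = x \<circ> Inl"
    and agree2: "zero_on_edge E2 (x \<circ> Inr) \<Longrightarrow> z \<circ> Inr = x \<circ> Inr"
  shows "(\<lambda>v. (1 - t) * z v + t * x v) \<in> union_realization"
    (is "?w \<in> _")
proof -
  have x_nonneg: "\<forall>v. 0 \<le> x v" and x_supp: "supp (x \<circ> Inl) \<subseteq> V1" "supp (x \<circ> Inr) \<subseteq> V2"
    and x_edge: "zero_on_edge E1 (x \<circ> Inl) \<or> zero_on_edge E2 (x \<circ> Inr)"
    and x_sum: "sum (x \<circ> Inl) V1 + sum (x \<circ> Inr) V2 = 1"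
    using x unfolding mem_union_realization_iff by blast+
  have z_nonneg: "\<forall>v. 0 \<le> z v" and z_supp: "supp (z \<circ> Inl) \<subseteq> V1" "supp (z \<circ> Inr) \<subseteq> V2"
    and z_sum: "sum (z \<circ> Inl) V1 + sum (z \<circ> Inr) V2 = 1"
    using z unfolding mem_union_realization_iff by blast+
  have supp_w: "supp (?w \<circ> f) \<subseteq> supp (z \<circ> f) \<union> supp (x \<circ> f)" for f :: "'c \<Rightarrow> 'a + 'b"
    by auto
  have sum_w: "sum (?w \<circ> f) A = (1 - t) * sum (z \<circ> f) A + t * sum (x \<circ> f) A" for f A
    by (simp add: sum.distrib sum_distrib_left)
  have "?w \<circ> Inl = x \<circ> Inl" if "zero_on_edge E1 (x \<circ> Inl)"
    using agree1[OF that] by (simp add: fun_eq_iff algebra_simps)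
  moreover have "?w \<circ> Inr = x \<circ> Inr" if "zero_on_edge E2 (x \<circ> Inr)"
    using agree2[OF that] by (simp add: fun_eq_iff algebra_simps)
  ultimately have "zero_on_edge E1 (?w \<circ> Inl) \<or> zero_on_edge E2 (?w \<circ> Inr)"
    using x_edge by auto
  moreover have "\<forall>v. 0 \<le> ?w v"
    using z_nonneg x_nonneg t by simp
  moreover have "supp (?w \<circ> Inl) \<subseteq> V1" "supp (?w \<circ> Inr) \<subseteq> V2"
    using supp_w[of Inl] supp_w[of Inr] z_supp x_supp by blast+
  moreover have "sum (?w \<circ> Inl) V1 + sum (?w \<circ> Inr) V2 =
      (1 - t) * (sum (z \<circ> Inl) V1 + sum (z \<circ> Inr) V2) + t * (sum (x \<circ> Inl) V1 + sum (x \<circ> Inr) V2)"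
    unfolding sum_w by (simp add: algebra_simps)
  ultimately show ?thesis
    using z_sum x_sum unfolding mem_union_realization_iff by simp
qed

lemma segment_in_union_realization:
  assumes x: "x \<in> union_realization" and "0 \<le> t" "t \<le> 1"
  shows "(\<lambda>v. (1 - t) * from_susp (to_susp x) v + t * x v) \<in> union_realization"
proof (rule convex_comb_in_union_realization)
  have nonneg: "\<forall>v. 0 \<le> x v"
    using x unfolding mem_union_realization_iff by blast
  show "from_susp (to_susp x) \<circ> Inl = x \<circ> Inl" if "zero_on_edge E1 (x \<circ> Inl)"
    using nonneg that by (rule from_susp_to_susp_Inl)
  show "from_susp (to_susp x) \<circ> Inr = x \<circ> Inr" if "zero_on_edge E2 (x \<circ> Inr)"
    using nonneg that by (rule from_susp_to_susp_Inr)
  show "from_susp (to_susp x) \<in> union_realization"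
    using x by (intro from_susp_in_union_realization to_susp_in_susp_realization)
qed (use assms in auto)

lemma continuous_on_to_susp: "continuous_on S to_susp"
proof (rule continuous_on_coordinatewise_then_product)
  fix w
  show "continuous_on S (\<lambda>x. to_susp x w)"
  proof (cases w)
    case (Inl v)
    then show ?thesis
      by (cases v) (auto simp: to_susp_def intro!: G1.continuous_on_lower G2.continuous_on_lower
          continuous_on_coordinate)
  next
    case (Inr b)
    then show ?thesis
      by (cases b) (auto simp: to_susp_def intro!: G1.continuous_on_removed G2.continuous_on_removed
          continuous_on_coordinate)
  qed
qed

lemma continuous_on_from_susp: "continuous_on S from_susp"
proof (rule continuous_on_coordinatewise_then_product)
  fix v
  show "continuous_on S (\<lambda>y. from_susp y v)"
    by (cases v) (auto simp: from_susp_def intro!: G1.continuous_on_raise G2.continuous_on_raise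
        continuous_on_coordinate)
qed

theorem realizations_homotopy_equivalent:
  "top_of_set union_realization homotopy_equivalent_space top_of_set susp_realization"
proof (rule deformation_retraction_imp_homotopy_equivalent_space)
  show "homotopic_with (\<lambda>x. True) (top_of_set union_realization) (top_of_set union_realization)
      (from_susp \<circ> to_susp) id"
    using segment_in_union_realization
    by (intro homotopic_with_linear_fun continuous_on_compose continuous_on_to_susp
        continuous_on_from_susp continuous_on_id) auto
  show "retraction_maps (top_of_set union_realization) (top_of_set susp_realization) to_susp from_susp"
    unfolding retraction_maps_def
    using continuous_on_to_susp continuous_on_from_susp to_susp_in_susp_realization from_susp_in_union_realization to_susp_from_susp
    by auto
qed

end

theorem lemma4p1:
  fixes V1 :: "'a set" and E1 :: "'a set set" and V2 :: "'b set" and E2 :: "'b set set"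
  assumes "simple_graph V1 E1" and "connected_graph V1 E1" and "E1 \<noteq> {}"
      and "simple_graph V2 E2" and "connected_graph V2 E2" and "E2 \<noteq> {}"
  shows "geom_real (non_cover_complex (dunion_V V1 V2) (dunion_E E1 E2))
           homotopy_equivalent_space
         geom_real (csusp (cjoin (non_cover_complex V1 E1) (non_cover_complex V2 E2)))"
proof -
  interpret two_graphs V1 E1 V2 E2
    by unfold_locales (fact assms)+
  show ?thesis
    unfolding geom_real_def by (rule realizations_homotopy_equivalent)
qed

end
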